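(* Let $\psi\in C^1(\mathbb{R})$ satisfy: $\psi(0)=1$, $\psi$ is even, there exist $C>0$ and $\delta>1$ with $|\psi(x)|+|x\psi'(x)|\leq C\langle x\rangle^{-\delta}$ for all $x\in\mathbb{R}$, and $A_\psi:=\int_{\mathbb{R}}\psi(x)\,\mathrm{d}x\neq 0$. Let $h(x)=\psi(x)+x\psi'(x)$ and let $\mu$ be a probability measure on $\mathbb{R}$. Then for $b\in\mathbb{R}$: 1. $\lim_{\varepsilon\downarrow0}\varepsilon\int_\varepsilon^\infty W_h(\mu)(b,a)\frac{\mathrm{d}a}{a}=\mu(\{b\})$. 2. Let $0<\alpha\leq1$ and assume that $(d_\alpha\mu)(b)$ exists. Then $\lim_{\varepsilon\downarrow0}\varepsilon^{1-\alpha}\int_\varepsilon^\infty W_h(\mu)(b,a)\frac{\mathrm{d}a}{a}=c_\alpha(d_\alpha\mu)(b)$, where $c_\alpha=\int_0^\infty\alpha2^\alpha y^{\alpha-1}\psi(y)\,\mathrm{d}y$.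
   Context: $\langle x\rangle=(1+x^2)^{1/2}$. The continuous wavelet transform of $\mu$ is $W_h(\mu)(b,a)=\frac1a\int_{-\infty}^{\infty}h((b-y)/a)\,\mathrm{d}\mu(y)$ for $b\in\mathbb{R}$, $a>0$. For $0\leq\alpha\leq1$, $(d_\alpha\mu)(x)=\lim_{\varepsilon\downarrow0}\mu((x-\varepsilon,x+\varepsilon))/(2\varepsilon)^\alpha$ whenever this limit exists. *)

theory Defs
  imports "HOL-Probability.Probability"
begin

definition jbracket :: "real \<Rightarrow> real" where
  "jbracket x = sqrt (1 + x\<^sup>2)"

definition wavelet_transform :: "(real \<Rightarrow> real) \<Rightarrow> real measure \<Rightarrow> real \<Rightarrow> real \<Rightarrow> real" where
  "wavelet_transform h \<mu> b a = (1 / a) * (\<integral>y. h ((b - y) / a) \<partial>\<mu>)"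

text \<open>(d_alpha mu)(x) exists and equals d: the limit of mu((x-e,x+e)) / (2e)^alpha as e tends to 0 from the right.\<close>
definition has_alpha_density :: "real \<Rightarrow> real measure \<Rightarrow> real \<Rightarrow> real \<Rightarrow> bool" where
  "has_alpha_density \<alpha> \<mu> x d \<longleftrightarrow>
     ((\<lambda>\<epsilon>. measure \<mu> {x - \<epsilon> <..< x + \<epsilon>} / (2 * \<epsilon>) powr \<alpha>) \<longlongrightarrow> d) (at_right 0)"

end

theory Submission
  imports Defs "HOL-Real_Asymp.Real_Asymp"
begin

(* Since a \<mapsto> -\<psi>(c/a)/a is an antiderivative of h(c/a)/a^2, Fubini gives
     \<integral>_e^\<infinity> W_h(\<mu>)(b,a) da/a = (1/e) \<integral> \<psi>((b-y)/e) d\<mu>(y).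
   Part 1 is then dominated convergence: \<psi>((b-y)/e) tends to the indicator of {b},
   because \<psi>(0) = 1 and \<psi> vanishes at infinity.
   For part 2, evenness and \<psi>(s) = -\<integral>_s^\<infinity> \<psi>' give the layer-cake form
     \<integral> \<psi>((b-y)/e) d\<mu>(y) = -\<integral>_0^\<infinity> \<psi>'(t) \<mu>((b-et, b+et)) dt.
   Divided by e^\<alpha>, the integrand is \<psi>'(t) (2t)^\<alpha> times the density ratio
   \<mu>((b-r, b+r))/(2r)^\<alpha> at r = et, which is bounded and tends to (d_\<alpha>\<mu>)(b); so the
   limit is -(d_\<alpha>\<mu>)(b) \<integral>_0^\<infinity> \<psi>'(t) (2t)^\<alpha> dt, which equals c_\<alpha> (d_\<alpha>\<mu>)(b) after an
   integration by parts. *)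

lemma set_integrable_powr_at_0:
  assumes "p > (-1::real)"
  shows "set_integrable lborel {0<..1} (\<lambda>t. t powr p)"
proof -
  have "(\<lambda>t. t powr p) integrable_on {0<..1}"
    by (rule integrable_on_powr_from_0') (use assms in auto)
  hence "(\<lambda>t. t powr p) absolutely_integrable_on {0<..1}"
    by (subst absolutely_integrable_on_iff_nonneg) auto
  thus ?thesis
    unfolding set_integrable_def by (subst (asm) integrable_completion) auto
qed

lemma set_integrable_powr_at_top:
  assumes "p < (-1::real)" "a > 0"
  shows "set_integrable lborel {a..} (\<lambda>t. t powr p)"
proof -
  have "(\<lambda>t. t powr p) integrable_on {a..}"
    using has_integral_powr_to_inf[OF assms] by (auto simp: integrable_on_def)
  hence "(\<lambda>t. t powr p) absolutely_integrable_on {a..}"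
    by (subst absolutely_integrable_on_iff_nonneg) (use assms in auto)
  thus ?thesis
    unfolding set_integrable_def by (subst (asm) integrable_completion) auto
qed

lemma set_integrable_inverse_square:
  assumes "(a::real) > 0"
  shows "set_integrable lborel {a<..} (\<lambda>t. 1 / t\<^sup>2)"
proof -
  have "set_integrable lborel {a<..} (\<lambda>t. t powr (-2))"
    by (rule set_integrable_subset[OF set_integrable_powr_at_top]) (use assms in auto)
  thus ?thesis
    by (rule set_integrable_cong[THEN iffD1, rotated -1])
       (use assms in \<open>auto simp: powr_minus_divide\<close>)
qed

lemma jbracket_ge_1: "jbracket x \<ge> 1"
  unfolding jbracket_def by simp

lemma abs_le_jbracket: "\<bar>x\<bar> \<le> jbracket x"
  unfolding jbracket_def by (simp add: real_le_rsqrt)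

lemma jbracket_pos: "jbracket x > 0"
  using jbracket_ge_1[of x] by linarith

lemma borel_measurable_jbracket[measurable]: "jbracket \<in> borel_measurable borel"
  unfolding jbracket_def by measurable

lemma jbracket_powr_le_1: "\<delta> \<ge> 0 \<Longrightarrow> jbracket x powr (- \<delta>) \<le> 1"
  using jbracket_ge_1[of x] by (simp add: powr_minus_divide ge_one_powr_ge_zero)

lemma jbracket_powr_le_powr: "x > 0 \<Longrightarrow> \<delta> \<ge> 0 \<Longrightarrow> jbracket x powr (- \<delta>) \<le> x powr (- \<delta>)"
  using abs_le_jbracket[of x] by (intro powr_mono2') auto

lemma set_integrable_powr_jbracket:
  assumes "0 < \<beta>" "\<beta> < \<delta>"
  shows "set_integrable lborel {0<..} (\<lambda>t. t powr (\<beta> - 1) * jbracket t powr (- \<delta>))"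
proof -
  have near_0: "set_integrable lborel {0<..1} (\<lambda>t. t powr (\<beta> - 1) * jbracket t powr (- \<delta>))"
  proof (rule set_integrable_bound[OF set_integrable_powr_at_0[of "\<beta> - 1"]])
    show "AE t in lborel. t \<in> {0<..1} \<longrightarrow>
            norm (t powr (\<beta> - 1) * jbracket t powr (- \<delta>)) \<le> norm (t powr (\<beta> - 1))"
      using jbracket_powr_le_1[of \<delta>] assms by (auto simp: abs_mult mult_left_le)
  qed (use assms in \<open>auto simp: set_borel_measurable_def\<close>)
  have near_top: "set_integrable lborel {1..} (\<lambda>t. t powr (\<beta> - 1) * jbracket t powr (- \<delta>))"
  proof (rule set_integrable_bound[OF set_integrable_powr_at_top[of "\<beta> - 1 - \<delta>" 1]])
    have "t powr (\<beta> - 1) * jbracket t powr (- \<delta>) \<le> t powr (\<beta> - 1 - \<delta>)" if "t \<ge> 1" for t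
    proof -
      have "t powr (\<beta> - 1) * jbracket t powr (- \<delta>) \<le> t powr (\<beta> - 1) * t powr (- \<delta>)"
        using jbracket_powr_le_powr[of t \<delta>] that assms by (intro mult_left_mono) auto
      also have "\<dots> = t powr (\<beta> - 1 - \<delta>)"
        using that by (simp add: powr_add[symmetric])
      finally show ?thesis .
    qed
    thus "AE t in lborel. t \<in> {1..} \<longrightarrow>
            norm (t powr (\<beta> - 1) * jbracket t powr (- \<delta>)) \<le> norm (t powr (\<beta> - 1 - \<delta>))"
      by auto
  qed (use assms in \<open>auto simp: set_borel_measurable_def\<close>)
  have "{0<..} = {0<..1} \<union> {1::real..}" by auto
  with set_integrable_Un[OF near_0 near_top] show ?thesis by simp
qed

lemma integral_dominated_convergence_at_right_0:
  fixes s :: "real \<Rightarrow> 'a \<Rightarrow> 'b::{banach, second_countable_topology}"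
  assumes "f \<in> borel_measurable M" "\<And>e. s e \<in> borel_measurable M" "integrable M w"
    and lim: "AE x in M. ((\<lambda>e. s e x) \<longlongrightarrow> f x) (at_right 0)"
    and bound: "\<forall>\<^sub>F e in at_right 0. AE x in M. norm (s e x) \<le> w x"
  shows "((\<lambda>e. integral\<^sup>L M (s e)) \<longlongrightarrow> integral\<^sup>L M f) (at_right 0)"
  unfolding filterlim_at_right_to_top
proof (rule integral_dominated_convergence_at_top[where w=w])
  show "AE x in M. ((\<lambda>t. s (inverse t) x) \<longlongrightarrow> f x) at_top"
    using lim by eventually_elim (simp add: filterlim_at_right_to_top)
  show "\<forall>\<^sub>F t in at_top. AE x in M. norm (s (inverse t) x) \<le> w x"
    using bound by (simp add: eventually_at_right_to_top)
qed (use assms in auto)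

lemma integral_set_integral_swap:
  fixes f :: "real \<Rightarrow> real \<Rightarrow> real"
  assumes "finite_measure \<mu>" and sets_\<mu>: "sets \<mu> = sets borel"
    and "S \<in> sets borel" and g: "set_integrable lborel S g"
    and f_measurable: "(\<lambda>(t, y). f t y) \<in> borel_measurable (lborel \<Otimes>\<^sub>M borel)"
    and f_bound: "\<And>t y. t \<in> S \<Longrightarrow> \<bar>f t y\<bar> \<le> g t"
  shows "(\<integral>y. (LBINT t:S. f t y) \<partial>\<mu>) = (LBINT t:S. (\<integral>y. f t y \<partial>\<mu>))"
proof -
  interpret finite_measure \<mu> by fact
  interpret P: pair_sigma_finite lborel \<mu> ..
  have [measurable_cong]: "sets \<mu> = sets borel" by (fact sets_\<mu>)
  have [measurable]: "S \<in> sets borel" by fact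
  have [measurable]: "(\<lambda>(t, y). f t y) \<in> borel_measurable (lborel \<Otimes>\<^sub>M \<mu>)"
    using f_measurable
    by (simp add: sets_pair_measure_cong[OF refl sets_\<mu>] cong: measurable_cong_sets)
  have g_integrable: "integrable lborel (\<lambda>t. indicator S t * g t)"
    using g unfolding set_integrable_def by simp
  then have [measurable]: "(\<lambda>t. indicator S t * g t) \<in> borel_measurable lborel"
    by (rule borel_measurable_integrable)
  have "integrable (lborel \<Otimes>\<^sub>M \<mu>) (\<lambda>(t, y). indicator S t * g t)"
    by (rule P.Fubini_integrable) (use integrable_norm[OF g_integrable] in auto)
  then have integrable: "integrable (lborel \<Otimes>\<^sub>M \<mu>) (\<lambda>(t, y). indicator S t * f t y)"
    by (rule Bochner_Integration.integrable_bound)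
       (use f_bound in
         \<open>auto simp: indicator_def intro!: AE_I2 intro: order_trans[OF _ abs_ge_self]\<close>)
  have "(\<integral>y. (LBINT t:S. f t y) \<partial>\<mu>) = (\<integral>y. (\<integral>t. indicator S t * f t y \<partial>lborel) \<partial>\<mu>)"
    by (simp add: set_lebesgue_integral_def)
  also have "\<dots> = (\<integral>t. (\<integral>y. indicator S t * f t y \<partial>\<mu>) \<partial>lborel)"
    using P.Fubini_integral[of "\<lambda>t y. indicator S t * f t y"] integrable by simp
  also have "\<dots> = (LBINT t:S. (\<integral>y. f t y \<partial>\<mu>))"
    by (simp add: set_lebesgue_integral_def)
  finally show ?thesis .
qed

lemma tendsto_set_integral_dilation_at_right_0:
  fixes f G :: "real \<Rightarrow> real"
  assumes f: "set_integrable lborel {0<..} f" and [measurable]: "G \<in> borel_measurable borel"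
    and G_bound: "\<And>r. r > 0 \<Longrightarrow> \<bar>G r\<bar> \<le> M" and G_lim: "(G \<longlongrightarrow> d) (at_right 0)"
  shows "((\<lambda>e. LBINT t:{0<..}. f t * G (e * t)) \<longlongrightarrow> (LBINT t:{0<..}. f t) * d) (at_right 0)"
proof -
  have [measurable]: "(\<lambda>t. indicator {0<..} t * f t) \<in> borel_measurable lborel"
    using f unfolding set_integrable_def by (simp add: borel_measurable_integrable)
  have "((\<lambda>e. LBINT t:{0<..}. f t * G (e * t)) \<longlongrightarrow> (LBINT t:{0<..}. f t * d)) (at_right 0)"
    unfolding set_lebesgue_integral_def
  proof (rule integral_dominated_convergence_at_right_0
      [where w="\<lambda>t. M * norm (indicator {0<..} t * f t)"])
    show "integrable lborel (\<lambda>t. M * norm (indicator {0<..} t * f t))"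
      using f unfolding set_integrable_def by (intro integrable_mult_right integrable_norm) simp
    show "AE t in lborel. ((\<lambda>e. indicator {0<..} t *\<^sub>R (f t * G (e * t)))
            \<longlongrightarrow> indicator {0<..} t *\<^sub>R (f t * d)) (at_right 0)"
    proof (rule AE_I2)
      fix t :: real
      show "((\<lambda>e. indicator {0<..} t *\<^sub>R (f t * G (e * t)))
              \<longlongrightarrow> indicator {0<..} t *\<^sub>R (f t * d)) (at_right 0)"
      proof (cases "t > 0")
        case True
        have "filterlim (\<lambda>e. e * t) (at_right 0) (at_right 0)"
        proof (rule tendsto_imp_filterlim_at_right)
          show "((\<lambda>e. e * t) \<longlongrightarrow> 0) (at_right 0)"
            by (auto intro!: tendsto_eq_intros)
          show "\<forall>\<^sub>F e in at_right 0. 0 < e * t"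
            using eventually_at_right_less[of 0] by eventually_elim (use True in simp)
        qed
        with G_lim have "((\<lambda>e. G (e * t)) \<longlongrightarrow> d) (at_right 0)"
          by (rule filterlim_compose)
        thus ?thesis using True by (simp add: tendsto_mult_left)
      qed simp
    qed
    show "\<forall>\<^sub>F e in at_right 0. AE t in lborel.
            norm (indicator {0<..} t *\<^sub>R (f t * G (e * t))) \<le> M * norm (indicator {0<..} t * f t)"
      using eventually_at_right_less[of 0]
      by eventually_elim
         (use G_bound in
           \<open>auto simp: abs_mult indicator_def mult.commute[of M] intro!: AE_I2 mult_left_mono\<close>)
    show "(\<lambda>t. indicator {0<..} t *\<^sub>R (f t * G (e * t))) \<in> borel_measurable lborel" for e
      by (simp add: mult.assoc[symmetric]) measurable
  qed (simp add: mult.assoc[symmetric])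
  thus ?thesis by simp
qed

lemma ratio_powr_bounded_on_pos:
  fixes F :: "real \<Rightarrow> real"
  assumes lim: "((\<lambda>r. F r / (2 * r) powr \<alpha>) \<longlongrightarrow> d) (at_right 0)"
    and "\<alpha> \<ge> 0" and F_bound: "\<And>r. \<bar>F r\<bar> \<le> K"
  obtains M where "\<And>r. r > 0 \<Longrightarrow> \<bar>F r / (2 * r) powr \<alpha>\<bar> \<le> M"
proof -
  have "\<forall>\<^sub>F r in at_right 0. dist (F r / (2 * r) powr \<alpha>) d < 1"
    using lim by (simp add: tendsto_iff)
  then obtain r0 where "r0 > 0" and near_0: "\<And>r. 0 < r \<Longrightarrow> r < r0 \<Longrightarrow> dist (F r / (2 * r) powr \<alpha>) d < 1"
    by (auto simp: eventually_at_right_field)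
  have "\<bar>F r / (2 * r) powr \<alpha>\<bar> \<le> \<bar>d\<bar> + 1 + K / (2 * r0) powr \<alpha>" if "r > 0" for r
  proof (cases "r < r0")
    case True
    have "0 \<le> K / (2 * r0) powr \<alpha>"
      using F_bound[of 0] by simp
    with near_0[OF \<open>r > 0\<close> True] show ?thesis
      unfolding dist_real_def by arith
  next
    case False
    have "\<bar>F r / (2 * r) powr \<alpha>\<bar> \<le> K / (2 * r) powr \<alpha>"
      using F_bound[of r] by (simp add: divide_right_mono)
    also have "\<dots> \<le> K / (2 * r0) powr \<alpha>"
      using False \<open>r0 > 0\<close> \<open>\<alpha> \<ge> 0\<close> F_bound[of r]
      by (intro divide_left_mono powr_mono2) auto
    finally show ?thesis by simp
  qed
  with that show ?thesis by blast
qed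

locale decaying_profile =
  fixes \<psi> \<psi>' :: "real \<Rightarrow> real" and C \<delta> :: real
  assumes psi_deriv: "\<And>x. (\<psi> has_real_derivative \<psi>' x) (at x)"
    and continuous_psi': "continuous_on UNIV \<psi>'"
    and psi_0: "\<psi> 0 = 1"
    and psi_even: "\<And>x. \<psi> (- x) = \<psi> x"
    and C_pos: "C > 0" and delta_gt_1: "\<delta> > 1"
    and psi_decay: "\<And>x. \<bar>\<psi> x\<bar> + \<bar>x * \<psi>' x\<bar> \<le> C * jbracket x powr (- \<delta>)"
begin

lemma isCont_psi: "isCont \<psi> x"
  using psi_deriv DERIV_isCont by blast

lemma isCont_psi': "isCont \<psi>' x"
  using continuous_psi' continuous_on_eq_continuous_at by blast

lemma borel_measurable_psi[measurable]: "\<psi> \<in> borel_measurable borel"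
  using isCont_psi by (intro borel_measurable_continuous_onI continuous_at_imp_continuous_on) auto

lemma borel_measurable_psi'[measurable]: "\<psi>' \<in> borel_measurable borel"
  using continuous_psi' by (rule borel_measurable_continuous_onI)

lemma abs_psi_le: "\<bar>\<psi> x\<bar> \<le> C * jbracket x powr (- \<delta>)"
  using psi_decay[of x] by linarith

lemma abs_x_psi'_le: "\<bar>x * \<psi>' x\<bar> \<le> C * jbracket x powr (- \<delta>)"
  using psi_decay[of x] by linarith

lemma abs_psi_le_powr:
  assumes "x > 0"
  shows "\<bar>\<psi> x\<bar> \<le> C * x powr (- \<delta>)"
proof -
  have "C * jbracket x powr (- \<delta>) \<le> C * x powr (- \<delta>)"
    using jbracket_powr_le_powr[OF assms, of \<delta>] C_pos delta_gt_1 by (intro mult_left_mono) auto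
  with abs_psi_le[of x] show ?thesis by linarith
qed

lemma C_jbracket_powr_le_C: "C * jbracket x powr (- \<delta>) \<le> C"
  using jbracket_powr_le_1[of \<delta> x] C_pos delta_gt_1 by (simp add: mult_left_le)

lemma abs_psi_le_C: "\<bar>\<psi> x\<bar> \<le> C"
  using abs_psi_le[of x] C_jbracket_powr_le_C[of x] by linarith

lemma abs_h_le_C: "\<bar>\<psi> x + x * \<psi>' x\<bar> \<le> C"
  using abs_triangle_ineq[of "\<psi> x" "x * \<psi>' x"] psi_decay[of x] C_jbracket_powr_le_C[of x]
  by linarith

lemma abs_psi_le_div_abs:
  assumes "x \<noteq> 0"
  shows "\<bar>\<psi> x\<bar> \<le> C / \<bar>x\<bar>"
proof -
  have "jbracket x powr (- \<delta>) \<le> jbracket x powr (- 1)"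
    using jbracket_ge_1[of x] delta_gt_1 by (intro powr_mono) auto
  also have "\<dots> \<le> 1 / \<bar>x\<bar>"
    using abs_le_jbracket[of x] jbracket_pos[of x] assms
    by (simp add: powr_minus_divide divide_left_mono)
  finally have "C * jbracket x powr (- \<delta>) \<le> C * (1 / \<bar>x\<bar>)"
    using C_pos by (intro mult_left_mono) auto
  with abs_psi_le[of x] show ?thesis by simp
qed

lemma powr_psi_tendsto_0_at_top:
  assumes "\<beta> < \<delta>"
  shows "((\<lambda>t. t powr \<beta> * \<psi> t) \<longlongrightarrow> 0) at_top"
proof (rule Lim_null_comparison)
  show "\<forall>\<^sub>F t in at_top. norm (t powr \<beta> * \<psi> t) \<le> C * t powr (\<beta> - \<delta>)"
    using eventually_gt_at_top[of 0]
  proof eventually_elim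
    case (elim t)
    have "norm (t powr \<beta> * \<psi> t) \<le> t powr \<beta> * (C * t powr (- \<delta>))"
      using abs_psi_le_powr[OF elim] by (simp add: abs_mult mult_left_mono)
    also have "\<dots> = C * t powr (\<beta> - \<delta>)"
      using elim by (simp add: powr_diff powr_minus_divide)
    finally show ?case .
  qed
  show "((\<lambda>t. C * t powr (\<beta> - \<delta>)) \<longlongrightarrow> 0) at_top"
    using assms by (intro tendsto_mult_right_zero tendsto_neg_powr filterlim_ident) auto
qed

lemma psi_tendsto_0_at_top: "(\<psi> \<longlongrightarrow> 0) at_top"
proof (rule Lim_transform_eventually)
  show "((\<lambda>t. t powr 0 * \<psi> t) \<longlongrightarrow> 0) at_top"
    using delta_gt_1 by (intro powr_psi_tendsto_0_at_top) simp
  show "\<forall>\<^sub>F t in at_top. t powr 0 * \<psi> t = \<psi> t"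
    using eventually_gt_at_top[of 0] by eventually_elim simp
qed

lemma set_integrable_psi': "set_integrable lborel {0<..} \<psi>'"
proof -
  have "set_integrable lborel {0..1} \<psi>'"
    unfolding set_integrable_def
    by (rule borel_integrable_compact) (auto intro: continuous_on_subset[OF continuous_psi'])
  moreover have "set_integrable lborel {1..} \<psi>'"
  proof (rule set_integrable_bound[OF
      set_integrable_mult_right[OF set_integrable_powr_at_top[of "- \<delta>" 1], of C]])
    have "\<bar>\<psi>' t\<bar> \<le> C * t powr (- \<delta>)" if "t \<ge> 1" for t
    proof -
      have "\<bar>\<psi>' t\<bar> \<le> \<bar>t * \<psi>' t\<bar>"
        using that by (simp add: abs_mult mult_le_cancel_right1)
      also have "\<dots> \<le> C * jbracket t powr (- \<delta>)" by (rule abs_x_psi'_le)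
      also have "\<dots> \<le> C * t powr (- \<delta>)"
        using jbracket_powr_le_powr[of t \<delta>] that delta_gt_1 C_pos by (intro mult_left_mono) auto
      finally show ?thesis .
    qed
    thus "AE t in lborel. t \<in> {1..} \<longrightarrow> norm (\<psi>' t) \<le> norm (C * t powr (- \<delta>))"
      using C_pos by auto
  qed (use delta_gt_1 in \<open>auto simp: set_borel_measurable_def\<close>)
  ultimately have "set_integrable lborel ({0..1} \<union> {1..}) \<psi>'"
    by (rule set_integrable_Un) auto
  thus ?thesis
    by (rule set_integrable_subset) auto
qed

lemma set_integrable_powr_psi:
  assumes "0 < \<beta>" "\<beta> < \<delta>"
  shows "set_integrable lborel {0<..} (\<lambda>t. t powr (\<beta> - 1) * \<psi> t)"
proof (rule set_integrable_bound[OF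
    set_integrable_mult_right[OF set_integrable_powr_jbracket[OF assms], of C]])
  have "\<bar>t powr (\<beta> - 1) * \<psi> t\<bar> \<le> C * (t powr (\<beta> - 1) * jbracket t powr (- \<delta>))" for t
    using mult_left_mono[OF abs_psi_le[of t], of "t powr (\<beta> - 1)"] by (simp add: abs_mult mult_ac)
  thus "AE t in lborel. t \<in> {0<..} \<longrightarrow> norm (t powr (\<beta> - 1) * \<psi> t)
          \<le> norm (C * (t powr (\<beta> - 1) * jbracket t powr (- \<delta>)))"
    by (auto intro: order_trans[OF _ abs_ge_self])
qed (auto simp: set_borel_measurable_def)

lemma set_integrable_powr_psi':
  assumes "0 < \<beta>" "\<beta> < \<delta>"
  shows "set_integrable lborel {0<..} (\<lambda>t. t powr \<beta> * \<psi>' t)"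
proof (rule set_integrable_bound[OF
    set_integrable_mult_right[OF set_integrable_powr_jbracket[OF assms], of C]])
  have "\<bar>t powr \<beta> * \<psi>' t\<bar> \<le> C * (t powr (\<beta> - 1) * jbracket t powr (- \<delta>))" if "t > 0" for t
  proof -
    have "\<bar>t powr \<beta> * \<psi>' t\<bar> = t powr (\<beta> - 1) * \<bar>t * \<psi>' t\<bar>"
      using that by (simp add: powr_diff abs_mult)
    also have "\<dots> \<le> t powr (\<beta> - 1) * (C * jbracket t powr (- \<delta>))"
      by (intro mult_left_mono abs_x_psi'_le) auto
    finally show ?thesis by (simp add: mult_ac)
  qed
  thus "AE t in lborel. t \<in> {0<..} \<longrightarrow> norm (t powr \<beta> * \<psi>' t)
          \<le> norm (C * (t powr (\<beta> - 1) * jbracket t powr (- \<delta>)))"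
    by (auto intro: order_trans[OF _ abs_ge_self])
qed (auto simp: set_borel_measurable_def)

lemma set_integral_dilated_h:
  assumes "e > 0"
  shows "(LBINT a:{e<..}. 1 / a\<^sup>2 * (\<psi> (c / a) + c / a * \<psi>' (c / a))) = \<psi> (c / e) / e"
proof -
  let ?f = "\<lambda>a. 1 / a\<^sup>2 * (\<psi> (c / a) + c / a * \<psi>' (c / a))"
  let ?F = "\<lambda>a. - \<psi> (c / a) / a"
  have integrable: "set_integrable lborel {e<..} ?f"
  proof (rule set_integrable_bound[OF
      set_integrable_mult_right[OF set_integrable_inverse_square[OF assms], of C]])
    have "\<bar>?f a\<bar> \<le> C * (1 / a\<^sup>2)" for a
      using abs_h_le_C[of "c / a"] by (auto simp: abs_mult intro!: divide_right_mono)
    thus "AE a in lborel. a \<in> {e<..} \<longrightarrow> norm (?f a) \<le> norm (C * (1 / a\<^sup>2))"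
      using C_pos by auto
  qed (auto simp: set_borel_measurable_def)
  have "(LBINT a=ereal e..\<infinity>. ?f a) = 0 - ?F e"
  proof (rule interval_integral_FTC_integrable)
    show "(?F has_vector_derivative ?f a) (at a)" if "ereal e < ereal a" for a
    proof -
      have "a > 0" using that assms by simp
      have "(?F has_real_derivative ?f a) (at a)"
        using \<open>a > 0\<close>
        by (auto intro!: derivative_eq_intros DERIV_chain2[OF psi_deriv]
                 simp: field_simps power2_eq_square)
      thus ?thesis by (simp add: has_real_derivative_iff_has_vector_derivative)
    qed
    show "isCont ?f a" if "ereal e < ereal a" for a
      using that assms
      by (auto intro!: continuous_intros isCont_o2[OF _ isCont_psi] isCont_o2[OF _ isCont_psi'])
    show "((?F \<circ> real_of_ereal) \<longlongrightarrow> ?F e) (at_right (ereal e))"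
      unfolding ereal_tendsto_simps using assms
      by (auto intro!: tendsto_eq_intros isCont_tendsto_compose[OF isCont_psi])
    show "((?F \<circ> real_of_ereal) \<longlongrightarrow> 0) (at_left \<infinity>)"
      unfolding ereal_tendsto_simps
    proof (rule Lim_null_comparison)
      show "\<forall>\<^sub>F a in at_top. norm (?F a) \<le> C / a"
        using eventually_gt_at_top[of 0]
        by eventually_elim (simp add: divide_right_mono abs_psi_le_C)
      show "((\<lambda>a. C / a) \<longlongrightarrow> 0) at_top" by real_asymp
    qed
  qed (use integrable in auto)
  thus ?thesis
    by (simp add: interval_lebesgue_integral_def)
qed

lemma psi_eq_minus_tail_integral:
  assumes "s \<ge> 0"
  shows "\<psi> s = - (LBINT t:{s<..}. \<psi>' t)"
proof -
  have "(LBINT t=ereal s..\<infinity>. \<psi>' t) = 0 - \<psi> s"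
  proof (rule interval_integral_FTC_integrable)
    show "(\<psi> has_vector_derivative \<psi>' t) (at t)" for t
      using psi_deriv by (simp add: has_real_derivative_iff_has_vector_derivative)
    show "set_integrable lborel (einterval s \<infinity>) \<psi>'"
      by (rule set_integrable_subset[OF set_integrable_psi']) (use assms in auto)
    show "((\<psi> \<circ> real_of_ereal) \<longlongrightarrow> \<psi> s) (at_right (ereal s))"
      unfolding ereal_tendsto_simps using isCont_psi[of s]
      by (simp add: continuous_at filterlim_at_split)
    show "((\<psi> \<circ> real_of_ereal) \<longlongrightarrow> 0) (at_left \<infinity>)"
      unfolding ereal_tendsto_simps by (rule psi_tendsto_0_at_top)
  qed (auto intro: isCont_psi')
  thus ?thesis
    by (simp add: interval_lebesgue_integral_def)
qed

lemma moment_psi_by_parts: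
  assumes "0 < \<beta>" "\<beta> < \<delta>"
  shows "\<beta> * (LBINT t:{0<..}. t powr (\<beta> - 1) * \<psi> t) = - (LBINT t:{0<..}. t powr \<beta> * \<psi>' t)"
proof -
  let ?F = "\<lambda>t. t powr \<beta> * \<psi> t"
  let ?f = "\<lambda>t. \<beta> * (t powr (\<beta> - 1) * \<psi> t) + t powr \<beta> * \<psi>' t"
  have integrable_parts: "set_integrable lborel {0<..} (\<lambda>t. \<beta> * (t powr (\<beta> - 1) * \<psi> t))"
      "set_integrable lborel {0<..} (\<lambda>t. t powr \<beta> * \<psi>' t)"
    using set_integrable_powr_psi[OF assms] set_integrable_powr_psi'[OF assms] by simp_all
  have "(LBINT t=ereal 0..\<infinity>. ?f t) = 0 - 0"
  proof (rule interval_integral_FTC_integrable)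
    show "(?F has_vector_derivative ?f t) (at t)" if "ereal 0 < ereal t" for t
    proof -
      have "(?F has_real_derivative ?f t) (at t)"
        using that by (auto intro!: derivative_eq_intros psi_deriv simp: algebra_simps)
      thus ?thesis by (simp add: has_real_derivative_iff_has_vector_derivative)
    qed
    show "isCont ?f t" if "ereal 0 < ereal t" for t
      using that by (auto intro!: continuous_intros isCont_psi isCont_psi')
    show "set_integrable lborel (einterval (ereal 0) \<infinity>) ?f"
      using set_integral_add(1)[OF integrable_parts] by simp
    show "((?F \<circ> real_of_ereal) \<longlongrightarrow> 0) (at_right (ereal 0))"
    proof -
      have "((\<lambda>t. t powr \<beta>) \<longlongrightarrow> 0) (at_right (0::real))"
        using assms by real_asymp
      moreover have "(\<psi> \<longlongrightarrow> \<psi> 0) (at_right 0)"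
        using isCont_psi[of 0] by (simp add: continuous_at filterlim_at_split)
      ultimately show ?thesis
        unfolding ereal_tendsto_simps using tendsto_mult by fastforce
    qed
    show "((?F \<circ> real_of_ereal) \<longlongrightarrow> 0) (at_left \<infinity>)"
      unfolding ereal_tendsto_simps using \<open>\<beta> < \<delta>\<close> by (rule powr_psi_tendsto_0_at_top)
  qed simp
  hence "(LBINT t:{0<..}. ?f t) = 0"
    by (simp add: interval_lebesgue_integral_def zero_ereal_def)
  thus ?thesis
    using set_integral_add(2)[OF integrable_parts] by simp
qed

lemma integral_dilated_psi_layer_cake:
  assumes "finite_measure \<mu>" and sets_\<mu>: "sets \<mu> = sets borel" and "e > 0"
  shows "(\<integral>y. \<psi> ((b - y) / e) \<partial>\<mu>) = - (LBINT t:{0<..}. \<psi>' t * measure \<mu> {b - e * t<..<b + e * t})"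
proof -
  interpret finite_measure \<mu> by fact
  let ?f = "\<lambda>t y. if b - e * t < y \<and> y < b + e * t then \<psi>' t else 0"
  have pointwise: "\<psi> ((b - y) / e) = - (LBINT t:{0<..}. ?f t y)" for y
  proof -
    have "\<psi> ((b - y) / e) = \<psi> (\<bar>b - y\<bar> / e)"
      using psi_even[of "(b - y) / e"] by (cases "b \<ge> y") (auto simp: minus_divide_left)
    also have "\<dots> = - (LBINT t:{\<bar>b - y\<bar> / e<..}. \<psi>' t)"
      by (rule psi_eq_minus_tail_integral) (use \<open>e > 0\<close> in auto)
    also have "(LBINT t:{\<bar>b - y\<bar> / e<..}. \<psi>' t) = (LBINT t:{0<..}. ?f t y)"
      unfolding set_lebesgue_integral_def
    proof (rule Bochner_Integration.integral_cong[OF refl])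
      fix t
      have "b - e * t < y \<Longrightarrow> y < b + e * t \<Longrightarrow> 0 < t"
        using \<open>e > 0\<close> mult_nonneg_nonpos[of e t] by (smt (verit))
      hence "\<bar>b - y\<bar> / e < t \<longleftrightarrow> 0 < t \<and> b - e * t < y \<and> y < b + e * t"
        using \<open>e > 0\<close> by (auto simp: divide_less_eq abs_less_iff mult.commute)
      thus "indicator {\<bar>b - y\<bar> / e<..} t *\<^sub>R \<psi>' t = indicator {0<..} t *\<^sub>R ?f t y"
        by (auto simp: indicator_def)
    qed
    finally show ?thesis .
  qed
  have "(\<integral>y. (LBINT t:{0<..}. ?f t y) \<partial>\<mu>) = (LBINT t:{0<..}. (\<integral>y. ?f t y \<partial>\<mu>))"
    by (rule integral_set_integral_swap[OF \<open>finite_measure \<mu>\<close> sets_\<mu> _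
          set_integrable_abs[OF set_integrable_psi']])
       auto
  also have "\<dots> = (LBINT t:{0<..}. \<psi>' t * measure \<mu> {b - e * t<..<b + e * t})"
  proof -
    have "space \<mu> = UNIV"
      using sets_eq_imp_space_eq[OF sets_\<mu>] by simp
    moreover have "(\<integral>y. ?f t y \<partial>\<mu>) = (\<integral>y. \<psi>' t * indicator {b - e * t<..<b + e * t} y \<partial>\<mu>)" for t
      by (intro Bochner_Integration.integral_cong) (auto simp: indicator_def)
    ultimately show ?thesis
      by simp
  qed
  finally show ?thesis
    using pointwise by simp
qed

lemma integral_wavelet_transform_eq:
  assumes "finite_measure \<mu>" and sets_\<mu>: "sets \<mu> = sets borel" and "e > 0"
  shows "(LBINT a:{e<..}. wavelet_transform (\<lambda>x. \<psi> x + x * \<psi>' x) \<mu> b a / a)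
           = (\<integral>y. \<psi> ((b - y) / e) \<partial>\<mu>) / e"
proof -
  let ?f = "\<lambda>a y. 1 / a\<^sup>2 * (\<psi> ((b - y) / a) + (b - y) / a * \<psi>' ((b - y) / a))"
  have "wavelet_transform (\<lambda>x. \<psi> x + x * \<psi>' x) \<mu> b a / a = (\<integral>y. ?f a y \<partial>\<mu>)" for a
    unfolding wavelet_transform_def by (simp add: power2_eq_square)
  hence "(LBINT a:{e<..}. wavelet_transform (\<lambda>x. \<psi> x + x * \<psi>' x) \<mu> b a / a)
           = (LBINT a:{e<..}. (\<integral>y. ?f a y \<partial>\<mu>))"
    by simp
  also have "\<dots> = (\<integral>y. (LBINT a:{e<..}. ?f a y) \<partial>\<mu>)"
  proof (rule integral_set_integral_swap[symmetric, OF \<open>finite_measure \<mu>\<close> sets_\<mu>])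
    show "set_integrable lborel {e<..} (\<lambda>a. C * (1 / a\<^sup>2))"
      using set_integrable_inverse_square[OF \<open>e > 0\<close>] by (rule set_integrable_mult_right)
    show "\<bar>?f a y\<bar> \<le> C * (1 / a\<^sup>2)" for a y
      using abs_h_le_C[of "(b - y) / a"] by (auto simp: abs_mult intro!: divide_right_mono)
  qed auto
  also have "\<dots> = (\<integral>y. \<psi> ((b - y) / e) / e \<partial>\<mu>)"
    using set_integral_dilated_h[OF \<open>e > 0\<close>] by simp
  finally show ?thesis
    by simp
qed

lemma tendsto_integral_dilated_psi:
  assumes "finite_measure \<mu>" and sets_\<mu>: "sets \<mu> = sets borel"
  shows "((\<lambda>e. \<integral>y. \<psi> ((b - y) / e) \<partial>\<mu>) \<longlongrightarrow> measure \<mu> {b}) (at_right 0)"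
proof -
  interpret finite_measure \<mu> by fact
  have [measurable_cong]: "sets \<mu> = sets borel" by (fact sets_\<mu>)
  have space_\<mu>: "space \<mu> = UNIV"
    using sets_eq_imp_space_eq[OF sets_\<mu>] by simp
  have "((\<lambda>e. \<psi> ((b - y) / e)) \<longlongrightarrow> indicator {b} y) (at_right 0)" for y
  proof (cases "y = b")
    case False
    have "((\<lambda>e. \<psi> ((b - y) / e)) \<longlongrightarrow> 0) (at_right 0)"
    proof (rule Lim_null_comparison)
      show "\<forall>\<^sub>F e in at_right 0. norm (\<psi> ((b - y) / e)) \<le> C * e / \<bar>b - y\<bar>"
        using eventually_at_right_less[of 0]
      proof eventually_elim
        case (elim e)
        have "\<bar>\<psi> ((b - y) / e)\<bar> \<le> C / \<bar>(b - y) / e\<bar>"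
          using False elim by (intro abs_psi_le_div_abs) simp
        thus ?case using elim by simp
      qed
      show "((\<lambda>e. C * e / \<bar>b - y\<bar>) \<longlongrightarrow> 0) (at_right 0)"
        using False by (auto intro!: tendsto_eq_intros)
    qed
    thus ?thesis using False by (auto simp: indicator_def)
  qed (simp add: psi_0)
  hence "((\<lambda>e. \<integral>y. \<psi> ((b - y) / e) \<partial>\<mu>) \<longlongrightarrow> (\<integral>y. indicator {b} y \<partial>\<mu>)) (at_right 0)"
    by (intro integral_dominated_convergence_at_right_0[where w="\<lambda>_. C"])
       (auto simp: abs_psi_le_C)
  thus ?thesis
    by (simp add: space_\<mu>)
qed

lemma set_integral_psi'_powr:
  assumes "0 < \<alpha>" "\<alpha> < \<delta>"
  shows "- (LBINT t:{0<..}. \<psi>' t * (2 * t) powr \<alpha>)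
           = (LBINT y:{0<..}. \<alpha> * 2 powr \<alpha> * y powr (\<alpha> - 1) * \<psi> y)"
proof -
  have "(LBINT t:{0<..}. \<psi>' t * (2 * t) powr \<alpha>) = (LBINT t:{0<..}. 2 powr \<alpha> * (t powr \<alpha> * \<psi>' t))"
    by (rule set_lebesgue_integral_cong) (auto simp: powr_mult)
  also have "\<dots> = 2 powr \<alpha> * - (\<alpha> * (LBINT t:{0<..}. t powr (\<alpha> - 1) * \<psi> t))"
    using moment_psi_by_parts[OF assms] by simp
  also have "\<dots> = - (\<alpha> * 2 powr \<alpha> * (LBINT t:{0<..}. t powr (\<alpha> - 1) * \<psi> t))"
    by simp
  also have "\<dots> = - (LBINT y:{0<..}. \<alpha> * 2 powr \<alpha> * y powr (\<alpha> - 1) * \<psi> y)"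
    by (simp add: mult.assoc)
  finally show ?thesis by simp
qed

lemma tendsto_powr_integral_dilated_psi:
  assumes "finite_measure \<mu>" and sets_\<mu>: "sets \<mu> = sets borel"
    and "0 < \<alpha>" "\<alpha> < \<delta>" and density: "has_alpha_density \<alpha> \<mu> b d"
  shows "((\<lambda>e. e powr (- \<alpha>) * (\<integral>y. \<psi> ((b - y) / e) \<partial>\<mu>))
           \<longlongrightarrow> (LBINT y:{0<..}. \<alpha> * 2 powr \<alpha> * y powr (\<alpha> - 1) * \<psi> y) * d) (at_right 0)"
proof -
  interpret finite_measure \<mu> by fact
  define F where "F r = measure \<mu> {b - r<..<b + r}" for r
  define G where "G r = F r / (2 * r) powr \<alpha>" for r
  have "mono F"
    unfolding F_def by (intro monoI finite_measure_mono) (auto simp: sets_\<mu>)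
  hence [measurable]: "F \<in> borel_measurable borel"
    by (rule borel_measurable_mono)
  hence [measurable]: "G \<in> borel_measurable borel"
    unfolding G_def by measurable
  have G_lim: "(G \<longlongrightarrow> d) (at_right 0)"
    using density unfolding has_alpha_density_def G_def F_def .
  have F_bound: "\<bar>F r\<bar> \<le> measure \<mu> (space \<mu>)" for r
    unfolding F_def by (simp add: bounded_measure)
  obtain M where G_bound: "\<And>r. r > 0 \<Longrightarrow> \<bar>G r\<bar> \<le> M"
    using ratio_powr_bounded_on_pos[OF G_lim[unfolded G_def] _ F_bound] \<open>\<alpha> > 0\<close>
    unfolding G_def by force
  have scaled_layer_cake: "e powr (- \<alpha>) * (\<integral>y. \<psi> ((b - y) / e) \<partial>\<mu>)
           = - (LBINT t:{0<..}. \<psi>' t * (2 * t) powr \<alpha> * G (e * t))" if "e > 0" for e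
  proof -
    have "e powr (- \<alpha>) * F (e * t) = (2 * t) powr \<alpha> * G (e * t)" if "t > 0" for t
      using \<open>e > 0\<close> that by (simp add: G_def powr_mult powr_minus_divide)
    hence "(LBINT t:{0<..}. e powr (- \<alpha>) * (\<psi>' t * F (e * t)))
             = (LBINT t:{0<..}. \<psi>' t * (2 * t) powr \<alpha> * G (e * t))"
      by (intro set_lebesgue_integral_cong) (auto simp: mult_ac)
    thus ?thesis
      using integral_dilated_psi_layer_cake[OF \<open>finite_measure \<mu>\<close> sets_\<mu> that] by (simp add: F_def)
  qed
  have integrable: "set_integrable lborel {0<..} (\<lambda>t. \<psi>' t * (2 * t) powr \<alpha>)"
    using set_integrable_mult_right[OF set_integrable_powr_psi'[OF \<open>0 < \<alpha>\<close> \<open>\<alpha> < \<delta>\<close>], of "2 powr \<alpha>"]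
    by (rule set_integrable_cong[THEN iffD1, rotated -1]) (auto simp: powr_mult)
  have "((\<lambda>e. - (LBINT t:{0<..}. \<psi>' t * (2 * t) powr \<alpha> * G (e * t)))
          \<longlongrightarrow> - (LBINT t:{0<..}. \<psi>' t * (2 * t) powr \<alpha>) * d) (at_right 0)"
    using tendsto_set_integral_dilation_at_right_0[OF integrable _ G_bound G_lim]
    by (auto intro: tendsto_minus)
  thus ?thesis
    unfolding set_integral_psi'_powr[OF \<open>0 < \<alpha>\<close> \<open>\<alpha> < \<delta>\<close>]
    by (rule tendsto_cong[THEN iffD1, rotated])
       (use eventually_at_right_less[of 0] in \<open>eventually_elim, simp add: scaled_layer_cake\<close>)
qed

end

theorem theorem2p6:
  fixes \<psi> \<psi>' :: "real \<Rightarrow> real" and \<mu> :: "real measure" and b :: real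
  assumes deriv: "\<And>x. (\<psi> has_real_derivative \<psi>' x) (at x)"
    and cont_deriv: "continuous_on UNIV \<psi>'"
    and psi0: "\<psi> 0 = 1"
    and even: "\<And>x. \<psi> (- x) = \<psi> x"
    and decay: "\<exists>C>0. \<exists>\<delta>>1. \<forall>x. \<bar>\<psi> x\<bar> + \<bar>x * \<psi>' x\<bar> \<le> C * jbracket x powr (- \<delta>)"
    and A_nonzero: "(\<integral>x. \<psi> x \<partial>lborel) \<noteq> 0"
    and prob: "prob_space \<mu>"
    and sets_\<mu>: "sets \<mu> = sets borel"
  defines "h \<equiv> (\<lambda>x. \<psi> x + x * \<psi>' x)"
  shows "((\<lambda>\<epsilon>. \<epsilon> * (LBINT a:{\<epsilon><..}. wavelet_transform h \<mu> b a / a))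
            \<longlongrightarrow> measure \<mu> {b}) (at_right 0) \<and>
         (\<forall>\<alpha> d. 0 < \<alpha> \<and> \<alpha> \<le> 1 \<and> has_alpha_density \<alpha> \<mu> b d \<longrightarrow>
           ((\<lambda>\<epsilon>. \<epsilon> powr (1 - \<alpha>) * (LBINT a:{\<epsilon><..}. wavelet_transform h \<mu> b a / a))
            \<longlongrightarrow> (LBINT y:{0<..}. \<alpha> * 2 powr \<alpha> * y powr (\<alpha> - 1) * \<psi> y) * d) (at_right 0))"
proof -
  obtain C \<delta> where "C > 0" "\<delta> > 1" "\<And>x. \<bar>\<psi> x\<bar> + \<bar>x * \<psi>' x\<bar> \<le> C * jbracket x powr (- \<delta>)"
    using decay by blast
  then interpret decaying_profile \<psi> \<psi>' C \<delta>
    using deriv cont_deriv psi0 even by unfold_locales auto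
  have "finite_measure \<mu>"
    using prob by (rule prob_space.axioms(1))
  have wavelet_integral: "\<forall>\<^sub>F e in at_right 0. (LBINT a:{e<..}. wavelet_transform h \<mu> b a / a)
                            = (\<integral>y. \<psi> ((b - y) / e) \<partial>\<mu>) / e"
    using eventually_at_right_less[of 0]
    by eventually_elim (simp add: h_def integral_wavelet_transform_eq[OF \<open>finite_measure \<mu>\<close> sets_\<mu>])
  show ?thesis
  proof (intro conjI allI impI)
    show "((\<lambda>\<epsilon>. \<epsilon> * (LBINT a:{\<epsilon><..}. wavelet_transform h \<mu> b a / a)) \<longlongrightarrow> measure \<mu> {b}) (at_right 0)"
      using tendsto_integral_dilated_psi[OF \<open>finite_measure \<mu>\<close> sets_\<mu>]
      by (rule tendsto_cong[THEN iffD1, rotated])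
         (use wavelet_integral eventually_at_right_less[of 0] in \<open>eventually_elim, simp\<close>)
  next
    fix \<alpha> d :: real
    assume "0 < \<alpha> \<and> \<alpha> \<le> 1 \<and> has_alpha_density \<alpha> \<mu> b d"
    with \<open>\<delta> > 1\<close> have "((\<lambda>e. e powr (- \<alpha>) * (\<integral>y. \<psi> ((b - y) / e) \<partial>\<mu>))
        \<longlongrightarrow> (LBINT y:{0<..}. \<alpha> * 2 powr \<alpha> * y powr (\<alpha> - 1) * \<psi> y) * d) (at_right 0)"
      by (intro tendsto_powr_integral_dilated_psi[OF \<open>finite_measure \<mu>\<close> sets_\<mu>]) auto
    thus "((\<lambda>\<epsilon>. \<epsilon> powr (1 - \<alpha>) * (LBINT a:{\<epsilon><..}. wavelet_transform h \<mu> b a / a))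
            \<longlongrightarrow> (LBINT y:{0<..}. \<alpha> * 2 powr \<alpha> * y powr (\<alpha> - 1) * \<psi> y) * d) (at_right 0)"
      by (rule tendsto_cong[THEN iffD1, rotated])
         (use wavelet_integral eventually_at_right_less[of 0] in
           \<open>eventually_elim, simp add: powr_diff powr_minus_divide\<close>)
  qed
qed

end
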